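(* For every $l$ and every arm $i$, the map $\Theta_l\ni\overline{\boldsymbol{\eta}}\mapsto\inf_{\overline{\boldsymbol{\eta}}'\in\Theta_{-l}}D(\boldsymbol{\eta}_i\|\boldsymbol{\eta}_i')$ is continuous.
   Context: $K$ arms; arm $i$ has observation density $f_i(x\mid\boldsymbol{\eta}_i)=h(x)\exp(\boldsymbol{\eta}_i^T\mathbf{T}(x)-\mathcal{A}_i(\boldsymbol{\eta}_i))$ with $\boldsymbol{\eta}_i$ in an open convex $\Psi_i\subset\mathbb{R}^d$, minimal representation, $\mathcal{A}_i$ strictly convex and $C^2$ with positive definite Hessian. $\boldsymbol{\kappa}_i=\nabla\mathcal{A}_i$; $D(\boldsymbol{\eta}_i\|\boldsymbol{\eta}_i')=(\boldsymbol{\eta}_i-\boldsymbol{\eta}_i')^T\boldsymbol{\kappa}_i(\boldsymbol{\eta}_i)-\mathcal{A}_i(\boldsymbol{\eta}_i)+\mathcal{A}_i(\boldsymbol{\eta}_i')$. $\overline{\boldsymbol{\eta}}=(\boldsymbol{\eta}_1,\dots,\boldsymbol{\eta}_K)$. Hypotheses: pairwise disjoint nonempty $\Theta_1,\dots,\Theta_M\subset\prod_i\Psi_i$ ($M\ge2$), each open relative to its affine hull; $\Theta_{-l}=\bigcup_{m\ne l}\Theta_m$. *)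

theory Defs
  imports "HOL-Analysis.Analysis" "HOL-Probability.Probability"
begin

definition strictly_convex_on :: "'a::real_vector set \<Rightarrow> ('a \<Rightarrow> real) \<Rightarrow> bool" where
  "strictly_convex_on S f \<longleftrightarrow> convex S \<and>
     (\<forall>x\<in>S. \<forall>y\<in>S. x \<noteq> y \<longrightarrow> (\<forall>u::real. 0 < u \<and> u < 1 \<longrightarrow>
        f ((1 - u) *\<^sub>R x + u *\<^sub>R y) < (1 - u) * f x + u * f y))"

text \<open>Bregman / KL divergence of an exponential family with log-partition A and mean map kappa:
  D(eta || eta') = (eta - eta')^T kappa(eta) - A(eta) + A(eta').\<close>
definition KL_div :: "(real^'d \<Rightarrow> real) \<Rightarrow> (real^'d \<Rightarrow> real^'d)
    \<Rightarrow> real^'d \<Rightarrow> real^'d \<Rightarrow> real" where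
  "KL_div A \<kappa> \<eta> \<eta>' = (\<eta> - \<eta>') \<bullet> \<kappa> \<eta> - A \<eta> + A \<eta>'"

end

theory Submission
  imports Defs
begin

text \<open>Writing \<open>D(e\<parallel>e') = e \<bullet> \<kappa> e - A e + (A e' - e' \<bullet> \<kappa> e)\<close>, the infimum over \<open>e'\<close> splits
  into a continuous function of \<open>e\<close> plus \<open>G (\<kappa> e)\<close>, where \<open>G y = inf (A e' - e' \<bullet> y)\<close> is an
  infimum of affine functions of \<open>y\<close>, hence concave. The gradient inequality for the convex \<open>A\<close>
  makes \<open>G\<close> finite on the image of the mean map \<open>\<kappa>\<close>, and since the Hessian is invertible this
  image contains a neighbourhood of every \<open>\<kappa> e\<close>. A finite concave function is continuous on
  an open set, so \<open>G \<circ> \<kappa>\<close> is continuous.\<close>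

lemma strictly_convex_on_imp_convex_on:
  assumes "strictly_convex_on S f"
  shows "convex_on S f"
proof
  fix t :: real and x y assume "0 < t" "t < 1" "x \<in> S" "y \<in> S"
  then show "f ((1 - t) *\<^sub>R x + t *\<^sub>R y) \<le> (1 - t) * f x + t * f y"
    using assms unfolding strictly_convex_on_def
    by (cases "x = y") (auto simp: scaleR_collapse algebra_simps less_imp_le)
next
  show "convex S" using assms by (simp add: strictly_convex_on_def)
qed

lemma convex_on_gradient_inequality:
  fixes f :: "'a::euclidean_space \<Rightarrow> real"
  assumes cf: "convex_on S f" and "open S" and q: "q \<in> S" and p: "p \<in> S"
    and df: "(f has_derivative (\<lambda>v. k \<bullet> v)) (at q)"
  shows "f q + k \<bullet> (p - q) \<le> f p"
proof -
  define line where "line t = q + t *\<^sub>R (p - q)" for t :: real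
  define T where "T = line -` S"
  define g where "g = f \<circ> line"
  have line_convex: "line ((1 - t) * x + t * y) = (1 - t) *\<^sub>R line x + t *\<^sub>R line y" for t x y
    by (simp add: line_def algebra_simps)
  have "open T"
    unfolding T_def line_def by (intro open_vimage \<open>open S\<close> continuous_intros)
  have "convex T"
    using cf unfolding convex_on_def by (simp add: T_def convex_alt line_convex)
  have "convex_on T g"
    using convex_onD[OF cf] \<open>convex T\<close>
    by (intro convex_onI) (auto simp: T_def g_def line_convex)
  have "0 \<in> T" "1 \<in> T"
    using q p by (auto simp: T_def line_def)
  have "(line has_derivative (\<lambda>t. t *\<^sub>R (p - q))) (at 0)"
    unfolding line_def by (auto intro!: derivative_eq_intros)
  moreover have "line 0 = q"
    by (simp add: line_def)
  ultimately have "(g has_derivative (\<lambda>t. k \<bullet> (t *\<^sub>R (p - q)))) (at 0)"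
    using has_derivative_compose df unfolding g_def comp_def by metis
  then have "(g has_field_derivative (k \<bullet> (p - q))) (at 0)"
    by (rule has_derivative_imp_has_field_derivative) (simp add: mult.commute)
  then have "(g has_field_derivative (k \<bullet> (p - q))) (at 0 within T)"
    by (rule has_field_derivative_at_within)
  from convex_on_imp_above_tangent[OF \<open>convex_on T g\<close> convex_connected[OF \<open>convex T\<close>] _ \<open>1 \<in> T\<close> this]
  have "k \<bullet> (p - q) \<le> g 1 - g 0"
    using \<open>0 \<in> T\<close> \<open>open T\<close> by (simp add: interior_open)
  then show ?thesis
    by (simp add: g_def line_def)
qed

lemma concave_on_INF_affine:
  fixes b :: "'i \<Rightarrow> 'a::real_inner"
  assumes "X \<noteq> {}" "convex C"
    and bdd: "\<And>y. y \<in> C \<Longrightarrow> bdd_below ((\<lambda>x. a x - b x \<bullet> y) ` X)"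
  shows "concave_on C (\<lambda>y. INF x\<in>X. a x - b x \<bullet> y)"
  unfolding concave_on_iff
proof (intro conjI ballI allI impI \<open>convex C\<close>)
  fix y z and u v :: real assume yz: "y \<in> C" "z \<in> C" and uv: "0 \<le> u" "0 \<le> v" "u + v = 1"
  show "u * (INF x\<in>X. a x - b x \<bullet> y) + v * (INF x\<in>X. a x - b x \<bullet> z)
          \<le> (INF x\<in>X. a x - b x \<bullet> (u *\<^sub>R y + v *\<^sub>R z))"
  proof (rule cINF_greatest[OF \<open>X \<noteq> {}\<close>])
    fix x assume "x \<in> X"
    then have "u * (INF x\<in>X. a x - b x \<bullet> y) + v * (INF x\<in>X. a x - b x \<bullet> z)
                 \<le> u * (a x - b x \<bullet> y) + v * (a x - b x \<bullet> z)"
      using bdd yz uv by (intro add_mono mult_left_mono cINF_lower) auto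
    also have "\<dots> = a x - b x \<bullet> (u *\<^sub>R y + v *\<^sub>R z)"
      using uv by (simp add: inner_add_right algebra_simps flip: distrib_right)
    finally show "u * (INF x\<in>X. a x - b x \<bullet> y) + v * (INF x\<in>X. a x - b x \<bullet> z)
                    \<le> a x - b x \<bullet> (u *\<^sub>R y + v *\<^sub>R z)" .
  qed
qed

lemma concave_on_continuous:
  fixes f :: "'a::euclidean_space \<Rightarrow> real"
  assumes "open S" "concave_on S f"
  shows "continuous_on S f"
  using continuous_on_minus[OF convex_on_continuous[of S "\<lambda>x. - f x"]] assms
  by (simp add: concave_on_def)

lemma mem_interior_image_invertible_derivative:
  fixes f :: "real^'n \<Rightarrow> real^'n"
  assumes "open S" "continuous_on S f" "x \<in> S"
    and df: "(f has_derivative (\<lambda>v. D *v v)) (at x)"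
    and ker: "\<And>v. D *v v = 0 \<Longrightarrow> v = 0"
  shows "f x \<in> interior (f ` S)"
proof -
  obtain B where "B ** D = mat 1"
    using ker matrix_left_invertible_ker by blast
  then have "D ** B = mat 1"
    by (rule matrix_left_right_inverse[THEN iffD1])
  then have "(\<lambda>v. D *v v) \<circ> (\<lambda>v. B *v v) = id"
    by (auto simp: fun_eq_iff matrix_vector_mul_assoc)
  then show ?thesis
    by (rule sussmann_open_mapping[OF assms(1-3) df, rotated])
       (auto simp: interior_open assms(1,3))
qed

theorem continuous_on_INF_KL_div:
  fixes A :: "real^'d \<Rightarrow> real" and g :: "'i \<Rightarrow> real^'d"
  assumes "open \<Psi>" and A_convex: "convex_on \<Psi> A"
    and A_grad: "\<And>e. e \<in> \<Psi> \<Longrightarrow> (A has_derivative (\<lambda>v. \<kappa> e \<bullet> v)) (at e)"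
    and A_hess: "\<And>e. e \<in> \<Psi> \<Longrightarrow> (\<kappa> has_derivative (\<lambda>v. H e *v v)) (at e)"
    and H_posdef: "\<And>e v. e \<in> \<Psi> \<Longrightarrow> v \<noteq> 0 \<Longrightarrow> 0 < v \<bullet> (H e *v v)"
    and "X \<noteq> {}" and g: "g ` X \<subseteq> \<Psi>"
  shows "continuous_on \<Psi> (\<lambda>e. INF x\<in>X. KL_div A \<kappa> e (g x))"
proof -
  define G where "G y = (INF x\<in>X. A (g x) - g x \<bullet> y)" for y
  have bdd: "bdd_below ((\<lambda>x. A (g x) - g x \<bullet> y) ` X)" if y: "y \<in> \<kappa> ` \<Psi>" for y
  proof -
    obtain q where q: "q \<in> \<Psi>" "y = \<kappa> q" using y by blast
    have "A q - q \<bullet> y \<le> A (g x) - g x \<bullet> y" if "x \<in> X" for x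
      using convex_on_gradient_inequality[OF A_convex \<open>open \<Psi>\<close> q(1) _ A_grad[OF q(1)], of "g x"]
        g that q by (auto simp: inner_diff_right inner_commute)
    then show ?thesis by (intro bdd_belowI2)
  qed
  have INF_eq: "(INF x\<in>X. KL_div A \<kappa> e (g x)) = e \<bullet> \<kappa> e - A e + G (\<kappa> e)" if "e \<in> \<Psi>" for e
  proof -
    have "(INF x\<in>X. KL_div A \<kappa> e (g x)) = (INF x\<in>X. (e \<bullet> \<kappa> e - A e) + (A (g x) - g x \<bullet> \<kappa> e))"
      by (rule INF_cong) (auto simp: KL_div_def inner_diff_left)
    also have "\<dots> = e \<bullet> \<kappa> e - A e + G (\<kappa> e)"
      unfolding G_def using bdd that \<open>X \<noteq> {}\<close> by (intro Inf_add_eq) auto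
    finally show ?thesis .
  qed
  have \<kappa>_cont: "continuous_on \<Psi> \<kappa>"
    using A_hess has_derivative_continuous by (blast intro: continuous_at_imp_continuous_on)
  have G_cont: "isCont G (\<kappa> e)" if e: "e \<in> \<Psi>" for e
  proof -
    have "\<kappa> e \<in> interior (\<kappa> ` \<Psi>)"
      using H_posdef[OF e]
      by (intro mem_interior_image_invertible_derivative[OF \<open>open \<Psi>\<close> \<kappa>_cont e A_hess[OF e]]) force
    then obtain r where "r > 0" "ball (\<kappa> e) r \<subseteq> \<kappa> ` \<Psi>"
      using mem_interior by blast
    then have "continuous_on (ball (\<kappa> e) r) G"
      unfolding G_def using bdd \<open>X \<noteq> {}\<close>
      by (intro concave_on_continuous concave_on_INF_affine) auto
    then show ?thesis
      using \<open>r > 0\<close> by (simp add: continuous_on_eq_continuous_at)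
  qed
  have "isCont (\<lambda>e. e \<bullet> \<kappa> e - A e + G (\<kappa> e)) e" if e: "e \<in> \<Psi>" for e
  proof -
    have "isCont \<kappa> e" "isCont A e"
      using A_hess[OF e] A_grad[OF e] by (auto dest: has_derivative_continuous)
    moreover from continuous_at_compose[OF this(1) G_cont[OF e]]
    have "isCont (\<lambda>e. G (\<kappa> e)) e" by (simp add: o_def)
    ultimately show ?thesis
      by (intro continuous_intros)
  qed
  then have "continuous_on \<Psi> (\<lambda>e. e \<bullet> \<kappa> e - A e + G (\<kappa> e))"
    by (intro continuous_at_imp_continuous_on ballI)
  then show ?thesis
    by (rule continuous_on_eq) (simp add: INF_eq)
qed

theorem lemma6:
  fixes \<mu> :: "'x measure"
    and h :: "'x \<Rightarrow> real"
    and T :: "'x \<Rightarrow> real^'d"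
    and \<Psi> :: "'k::finite \<Rightarrow> (real^'d) set"
    and A :: "'k \<Rightarrow> real^'d \<Rightarrow> real"
    and \<kappa> :: "'k \<Rightarrow> real^'d \<Rightarrow> real^'d"
    and H :: "'k \<Rightarrow> real^'d \<Rightarrow> real^'d^'d"
    and \<Theta> :: "nat \<Rightarrow> (real^'d^'k) set"
    and M l :: nat
    and i :: 'k
  assumes h_meas: "h \<in> borel_measurable \<mu>"
    and h_nonneg: "\<And>x. 0 \<le> h x"
    and T_meas: "T \<in> borel_measurable \<mu>"
    and density: "\<And>j \<eta>. \<eta> \<in> \<Psi> j \<Longrightarrow>
        integrable \<mu> (\<lambda>x. h x * exp (\<eta> \<bullet> T x - A j \<eta>)) \<and>
        (\<integral>x. h x * exp (\<eta> \<bullet> T x - A j \<eta>) \<partial>\<mu>) = 1"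
    and minimal: "\<And>v c. (AE x in \<mu>. h x \<noteq> 0 \<longrightarrow> v \<bullet> T x = c) \<Longrightarrow> v = 0"
    and Psi_open: "\<And>j. open (\<Psi> j)"
    and Psi_convex: "\<And>j. convex (\<Psi> j)"
    and A_strict: "\<And>j. strictly_convex_on (\<Psi> j) (A j)"
    and A_grad: "\<And>j \<eta>. \<eta> \<in> \<Psi> j \<Longrightarrow> (A j has_derivative (\<lambda>v. \<kappa> j \<eta> \<bullet> v)) (at \<eta>)"
    and A_hess: "\<And>j \<eta>. \<eta> \<in> \<Psi> j \<Longrightarrow> (\<kappa> j has_derivative (\<lambda>v. H j \<eta> *v v)) (at \<eta>)"
    and A_C2: "\<And>j. continuous_on (\<Psi> j) (H j)"
    and H_posdef: "\<And>j \<eta> v. \<eta> \<in> \<Psi> j \<Longrightarrow> v \<noteq> 0 \<Longrightarrow> 0 < v \<bullet> (H j \<eta> *v v)"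
    and M_ge: "2 \<le> M"
    and Theta_ne: "\<And>m. m < M \<Longrightarrow> \<Theta> m \<noteq> {}"
    and Theta_sub: "\<And>m. m < M \<Longrightarrow> \<Theta> m \<subseteq> {\<eta>b. \<forall>j. \<eta>b $ j \<in> \<Psi> j}"
    and Theta_relopen: "\<And>m. m < M \<Longrightarrow> openin (top_of_set (affine hull \<Theta> m)) (\<Theta> m)"
    and Theta_disj: "\<And>m m'. m < M \<Longrightarrow> m' < M \<Longrightarrow> m \<noteq> m' \<Longrightarrow> \<Theta> m \<inter> \<Theta> m' = {}"
    and l_lt: "l < M"
  shows "continuous_on (\<Theta> l)
           (\<lambda>\<eta>b. INF \<eta>b'\<in>(\<Union>m\<in>{..<M} - {l}. \<Theta> m). KL_div (A i) (\<kappa> i) (\<eta>b $ i) (\<eta>b' $ i))"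
proof -
  define S where "S = (\<Union>m\<in>{..<M} - {l}. \<Theta> m)"
  define m :: nat where "m = (if l = 0 then 1 else 0)"
  have "m < M" "m \<noteq> l"
    using M_ge by (auto simp: m_def)
  then have S_ne: "S \<noteq> {}"
    using Theta_ne unfolding S_def by blast
  have S_sub: "(\<lambda>\<eta>b. \<eta>b $ i) ` S \<subseteq> \<Psi> i"
    using Theta_sub unfolding S_def by fastforce
  have "continuous_on (\<Psi> i) (\<lambda>e. INF \<eta>b'\<in>S. KL_div (A i) (\<kappa> i) e (\<eta>b' $ i))"
    using Psi_open[of i] strictly_convex_on_imp_convex_on[OF A_strict[of i]]
      A_grad[where j = i] A_hess[where j = i] H_posdef[where j = i] S_ne S_sub
    by (rule continuous_on_INF_KL_div)
  moreover have "continuous_on (\<Theta> l) (\<lambda>\<eta>b. \<eta>b $ i)"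
    by (intro continuous_intros)
  moreover have "(\<lambda>\<eta>b. \<eta>b $ i) ` \<Theta> l \<subseteq> \<Psi> i"
    using Theta_sub[OF l_lt] by blast
  ultimately show ?thesis
    unfolding S_def by (rule continuous_on_compose2)
qed

end
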